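(* Let $\varphi: M^m \hookrightarrow \mathbb{S}^{m+1}$ be a biharmonic hypersurface. Then at every point of $M$, $$\mathrm{Ricci}^M(\operatorname{grad} f,\operatorname{grad} f) = \Big(m-1-\frac{3m^2}{4} f^2\Big)|\operatorname{grad} f|^2 .$$
   Context: For a hypersurface $\varphi: M^m\hookrightarrow \mathbb{S}^{m+1}$ (unit sphere) with global unit normal $\eta$ and induced metric, the shape operator is $A(X) = -\nabla^{\mathbb{S}^{m+1}}_X \eta$, the mean curvature is $f = \frac{1}{m}\operatorname{trace} A$, and $\Delta = -\operatorname{trace}\nabla\operatorname{grad}$. The hypersurface is biharmonic if and only if $\Delta f = (m-|A|^2) f$ and $A(\operatorname{grad} f) = -\frac{m}{2} f \operatorname{grad} f$. *)

theory Defs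
  imports "HOL-Analysis.Analysis"
begin

text \<open>Local-coordinate (chart) description of a hypersurface
  phi : U \<subseteq> R^m \<rightarrow> S^(m+1) \<subseteq> R^(m+2), U open, with unit normal eta.
  All geometric quantities of the induced metric are written in the coordinates
  of the chart; tangent vectors are given by their coordinate components.\<close>

definition pd :: "'m::finite \<Rightarrow> (real^'m \<Rightarrow> 'b::real_normed_vector) \<Rightarrow> real^'m \<Rightarrow> 'b" where
  "pd i F x = frechet_derivative F (at x) (axis i 1)"

fun ipd :: "'m::finite list \<Rightarrow> (real^'m \<Rightarrow> 'b::real_normed_vector) \<Rightarrow> real^'m \<Rightarrow> 'b" where
  "ipd [] F = F"
| "ipd (i # is) F = pd i (ipd is F)"

definition smooth_on_chart :: "(real^'m::finite) set \<Rightarrow> (real^'m \<Rightarrow> 'b::real_normed_vector) \<Rightarrow> bool" where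
  "smooth_on_chart U F \<longleftrightarrow> (\<forall>is. \<forall>x\<in>U. ipd is F differentiable (at x))"

definition metric :: "(real^'m::finite \<Rightarrow> real^'n::finite) \<Rightarrow> real^'m \<Rightarrow> real^'m^'m" where
  "metric \<phi> x = (\<chi> i j. pd i \<phi> x \<bullet> pd j \<phi> x)"

definition metric_inv :: "(real^'m::finite \<Rightarrow> real^'n::finite) \<Rightarrow> real^'m \<Rightarrow> real^'m^'m" where
  "metric_inv \<phi> x = matrix_inv (metric \<phi> x)"

text \<open>Second fundamental form h_ij = <A d_i, d_j> with A(X) = - nabla_X eta,
  which equals <eta, d_i d_j phi>.\<close>
definition sff :: "(real^'m::finite \<Rightarrow> real^'n::finite) \<Rightarrow> (real^'m \<Rightarrow> real^'n) \<Rightarrow> real^'m \<Rightarrow> real^'m^'m" where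
  "sff \<phi> \<eta> x = (\<chi> i j. pd i (pd j \<phi>) x \<bullet> \<eta> x)"

definition mean_curv :: "(real^'m::finite \<Rightarrow> real^'n::finite) \<Rightarrow> (real^'m \<Rightarrow> real^'n) \<Rightarrow> real^'m \<Rightarrow> real" where
  "mean_curv \<phi> \<eta> x = (1 / real CARD('m)) *
     (\<Sum>i\<in>UNIV. \<Sum>j\<in>UNIV. metric_inv \<phi> x $ i $ j * sff \<phi> \<eta> x $ i $ j)"

definition shape_norm2 :: "(real^'m::finite \<Rightarrow> real^'n::finite) \<Rightarrow> (real^'m \<Rightarrow> real^'n) \<Rightarrow> real^'m \<Rightarrow> real" where
  "shape_norm2 \<phi> \<eta> x = (\<Sum>i\<in>UNIV. \<Sum>j\<in>UNIV. \<Sum>k\<in>UNIV. \<Sum>l\<in>UNIV.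
     metric_inv \<phi> x $ i $ k * metric_inv \<phi> x $ j $ l * sff \<phi> \<eta> x $ i $ j * sff \<phi> \<eta> x $ k $ l)"

definition shape_op :: "(real^'m::finite \<Rightarrow> real^'n::finite) \<Rightarrow> (real^'m \<Rightarrow> real^'n) \<Rightarrow> real^'m \<Rightarrow> real^'m \<Rightarrow> real^'m" where
  "shape_op \<phi> \<eta> x X = (\<chi> i. \<Sum>k\<in>UNIV. \<Sum>j\<in>UNIV. metric_inv \<phi> x $ i $ k * sff \<phi> \<eta> x $ k $ j * X $ j)"

definition grad_chart :: "(real^'m::finite \<Rightarrow> real^'n::finite) \<Rightarrow> (real^'m \<Rightarrow> real) \<Rightarrow> real^'m \<Rightarrow> real^'m" where
  "grad_chart \<phi> u x = (\<chi> i. \<Sum>j\<in>UNIV. metric_inv \<phi> x $ i $ j * pd j u x)"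

definition g_inner :: "(real^'m::finite \<Rightarrow> real^'n::finite) \<Rightarrow> real^'m \<Rightarrow> real^'m \<Rightarrow> real^'m \<Rightarrow> real" where
  "g_inner \<phi> x X Y = (\<Sum>i\<in>UNIV. \<Sum>j\<in>UNIV. metric \<phi> x $ i $ j * X $ i * Y $ j)"

text \<open>Laplace-Beltrami operator with the sign convention Delta = - trace nabla grad:
  Delta u = - (1/sqrt(det g)) d_i (sqrt(det g) g^ij d_j u).\<close>
definition laplacian :: "(real^'m::finite \<Rightarrow> real^'n::finite) \<Rightarrow> (real^'m \<Rightarrow> real) \<Rightarrow> real^'m \<Rightarrow> real" where
  "laplacian \<phi> u x = - (1 / sqrt (det (metric \<phi> x))) *
     (\<Sum>i\<in>UNIV. pd i (\<lambda>y. sqrt (det (metric \<phi> y)) *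
        (\<Sum>j\<in>UNIV. metric_inv \<phi> y $ i $ j * pd j u y)) x)"

definition christoffel :: "(real^'m::finite \<Rightarrow> real^'n::finite) \<Rightarrow> 'm \<Rightarrow> 'm \<Rightarrow> 'm \<Rightarrow> real^'m \<Rightarrow> real" where
  "christoffel \<phi> k i j x = (1/2) * (\<Sum>l\<in>UNIV. metric_inv \<phi> x $ k $ l *
     (pd i (\<lambda>y. metric \<phi> y $ j $ l) x + pd j (\<lambda>y. metric \<phi> y $ i $ l) x
      - pd l (\<lambda>y. metric \<phi> y $ i $ j) x))"

definition ricci :: "(real^'m::finite \<Rightarrow> real^'n::finite) \<Rightarrow> real^'m \<Rightarrow> real^'m^'m" where
  "ricci \<phi> x = (\<chi> i j. \<Sum>k\<in>UNIV.
      pd k (christoffel \<phi> k i j) x - pd j (christoffel \<phi> k i k) x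
      + (\<Sum>l\<in>UNIV. christoffel \<phi> k k l x * christoffel \<phi> l i j x
                   - christoffel \<phi> k j l x * christoffel \<phi> l i k x))"

definition ricci_form :: "(real^'m::finite \<Rightarrow> real^'n::finite) \<Rightarrow> real^'m \<Rightarrow> real^'m \<Rightarrow> real^'m \<Rightarrow> real" where
  "ricci_form \<phi> x X Y = (\<Sum>i\<in>UNIV. \<Sum>j\<in>UNIV. ricci \<phi> x $ i $ j * X $ i * Y $ j)"

definition sphere_hypersurface_chart ::
  "(real^'m::finite) set \<Rightarrow> (real^'m \<Rightarrow> real^'n::finite) \<Rightarrow> (real^'m \<Rightarrow> real^'n) \<Rightarrow> bool" where
  "sphere_hypersurface_chart U \<phi> \<eta> \<longleftrightarrow>
     open U \<and> CARD('n) = CARD('m) + 2 \<and>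
     smooth_on_chart U \<phi> \<and> smooth_on_chart U \<eta> \<and>
     (\<forall>x\<in>U. norm (\<phi> x) = 1) \<and>
     (\<forall>x\<in>U. inj (frechet_derivative \<phi> (at x))) \<and>
     (\<forall>x\<in>U. norm (\<eta> x) = 1 \<and> \<eta> x \<bullet> \<phi> x = 0 \<and> (\<forall>i. \<eta> x \<bullet> pd i \<phi> x = 0))"

text \<open>Biharmonicity, via the characterization given in the paper:
  Delta f = (m - |A|^2) f and A(grad f) = -(m/2) f grad f.\<close>
definition biharmonic_chart ::
  "(real^'m::finite) set \<Rightarrow> (real^'m \<Rightarrow> real^'n::finite) \<Rightarrow> (real^'m \<Rightarrow> real^'n) \<Rightarrow> bool" where
  "biharmonic_chart U \<phi> \<eta> \<longleftrightarrow>
     (\<forall>x\<in>U. laplacian \<phi> (mean_curv \<phi> \<eta>) x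
              = (real CARD('m) - shape_norm2 \<phi> \<eta> x) * mean_curv \<phi> \<eta> x) \<and>
     (\<forall>x\<in>U. shape_op \<phi> \<eta> x (grad_chart \<phi> (mean_curv \<phi> \<eta>) x)
              = (- (real CARD('m) / 2) * mean_curv \<phi> \<eta> x) *\<^sub>R grad_chart \<phi> (mean_curv \<phi> \<eta>) x)"

end

theory Submission
  imports Defs
begin

text \<open>Expanding the second derivatives of \<open>\<phi>\<close> in the frame \<open>\<partial>\<^sub>1\<phi>, \<dots>, \<partial>\<^sub>m\<phi>, \<eta>, \<phi>\<close>
  of \<open>\<real>\<^sup>m\<^sup>+\<^sup>2\<close> gives the Gauss equation \<open>Ric = (m - 1) g + (m f) h - h g\<^sup>-\<^sup>1 h\<close> of a hypersurface
  of the unit sphere. The second biharmonicity condition says that \<open>grad f\<close> is an eigenvector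
  of the shape operator with eigenvalue \<open>c = - (m/2) f\<close>, so evaluating on \<open>grad f\<close> gives
  \<open>(m - 1 + m f c - c\<^sup>2) |grad f|\<^sup>2 = (m - 1 - 3m\<^sup>2f\<^sup>2/4) |grad f|\<^sup>2\<close>.\<close>

lemma pd_eq_derivative:
  assumes "(F has_derivative D) (at y)"
  shows "pd i F y = D (axis i 1)"
  using assms frechet_derivative_at unfolding pd_def by metis

lemma pd_cong_open:
  assumes "open U" "y \<in> U" "\<And>z. z \<in> U \<Longrightarrow> F z = G z"
  shows "pd i F y = pd i G y"
proof -
  have "(F has_derivative D) (at y) \<longleftrightarrow> (G has_derivative D) (at y)" for D
    using assms has_derivative_transform_within_open[of _ _ y UNIV U] by metis
  then show ?thesis unfolding pd_def frechet_derivative_def by simp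
qed

lemma differentiable_cong_open:
  assumes "open U" "y \<in> U" "\<And>z. z \<in> U \<Longrightarrow> F z = G z" "F differentiable (at y)"
  shows "G differentiable (at y)"
  using assms has_derivative_transform_within_open[of F _ y UNIV U G] unfolding differentiable_def
  by metis

lemma pd_inner:
  fixes F G :: "real^'m::finite \<Rightarrow> real^'n::finite"
  assumes "F differentiable (at y)" "G differentiable (at y)"
  shows "pd a (\<lambda>z. F z \<bullet> G z) y = pd a F y \<bullet> G y + F y \<bullet> pd a G y"
  using pd_eq_derivative[OF has_derivative_inner[OF assms[unfolded frechet_derivative_works]]]
  by (simp add: pd_def)

lemma pd_mult:
  fixes f g :: "real^'m::finite \<Rightarrow> real"
  assumes "f differentiable (at y)" "g differentiable (at y)"
  shows "pd a (\<lambda>z. f z * g z) y = pd a f y * g y + f y * pd a g y"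
  using pd_eq_derivative[OF has_derivative_mult[OF assms[unfolded frechet_derivative_works]]]
  by (simp add: pd_def)

lemma pd_sum:
  fixes f :: "'i \<Rightarrow> real^'m::finite \<Rightarrow> real"
  assumes "finite S" "\<And>l. l \<in> S \<Longrightarrow> f l differentiable (at y)"
  shows "pd a (\<lambda>z. \<Sum>l\<in>S. f l z) y = (\<Sum>l\<in>S. pd a (f l) y)"
proof -
  have "((\<lambda>z. \<Sum>l\<in>S. f l z) has_derivative (\<lambda>h. \<Sum>l\<in>S. frechet_derivative (f l) (at y) h)) (at y)"
    using assms frechet_derivative_works by (intro has_derivative_sum) blast
  from pd_eq_derivative[OF this] show ?thesis by (simp add: pd_def)
qed

lemma pd_const: "pd a (\<lambda>z. c) y = 0"
  unfolding pd_def by simp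

lemma differentiable_det:
  fixes M :: "real^'m::finite \<Rightarrow> real^'k::finite^'k"
  assumes "\<And>i j. (\<lambda>z. M z $ i $ j) differentiable (at y)"
  shows "(\<lambda>z. det (M z)) differentiable (at y)"
proof -
  have "(\<lambda>z. \<Prod>i\<in>UNIV. M z $ i $ p i) differentiable (at y)" for p :: "'k \<Rightarrow> 'k"
    using has_derivative_prod[of UNIV "\<lambda>i z. M z $ i $ p i" "\<lambda>i. frechet_derivative (\<lambda>z. M z $ i $ p i) (at y)"]
      assms frechet_derivative_works unfolding differentiable_def by blast
  then show ?thesis
    unfolding det_def by (auto intro!: differentiable_mult)
qed

lemma has_derivative_component_along_axis:
  fixes F :: "real^'m::finite \<Rightarrow> real^'n::finite"
  assumes "F differentiable (at (p + s *\<^sub>R axis i 1))"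
  shows "((\<lambda>s. F (p + s *\<^sub>R axis i 1) $ k) has_derivative
          (\<lambda>h. h * pd i F (p + s *\<^sub>R axis i 1) $ k)) (at s within S)"
proof -
  let ?D = "frechet_derivative F (at (p + s *\<^sub>R axis i 1))"
  have "((\<lambda>s. p + s *\<^sub>R axis i 1) has_derivative (\<lambda>h. h *\<^sub>R axis i 1)) (at s within S)"
    by (auto intro!: derivative_eq_intros)
  from has_derivative_compose[OF this frechet_derivative_works[THEN iffD1, OF assms]]
  have "((\<lambda>s. F (p + s *\<^sub>R axis i 1)) has_derivative (\<lambda>h. ?D (h *\<^sub>R axis i 1))) (at s within S)"
    by (simp add: o_def)
  then have "((\<lambda>s. F (p + s *\<^sub>R axis i 1) $ k) has_derivative (\<lambda>h. ?D (h *\<^sub>R axis i 1) $ k)) (at s within S)"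
    using bounded_linear.has_derivative[OF bounded_linear_vec_nth] by blast
  moreover have "linear ?D"
    using assms frechet_derivative_works has_derivative_linear by blast
  ultimately show ?thesis by (simp add: linear_scale pd_def)
qed

lemma mvt_axis_component:
  fixes F :: "real^'m::finite \<Rightarrow> real^'n::finite"
  assumes "0 < t" "\<And>s. s \<in> {0..t} \<Longrightarrow> F differentiable (at (p + s *\<^sub>R axis i 1))"
  shows "\<exists>s\<in>{0<..<t}. F (p + t *\<^sub>R axis i 1) $ k - F p $ k = t * pd i F (p + s *\<^sub>R axis i 1) $ k"
  using mvt_simple[OF assms(1) has_derivative_component_along_axis[OF assms(2)]] by auto

lemma mvt_axis_component_diff:
  fixes F :: "real^'m::finite \<Rightarrow> real^'n::finite"
  assumes "0 < t"
    and "\<And>s. s \<in> {0..t} \<Longrightarrow> F differentiable (at (p + s *\<^sub>R axis i 1))"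
    and "\<And>s. s \<in> {0..t} \<Longrightarrow> F differentiable (at (q + s *\<^sub>R axis i 1))"
  shows "\<exists>s\<in>{0<..<t}. (F (q + t *\<^sub>R axis i 1) $ k - F q $ k) - (F (p + t *\<^sub>R axis i 1) $ k - F p $ k)
           = t * (pd i F (q + s *\<^sub>R axis i 1) $ k - pd i F (p + s *\<^sub>R axis i 1) $ k)"
proof -
  have "\<exists>s\<in>{0<..<t}. (F (q + t *\<^sub>R axis i 1) $ k - F (p + t *\<^sub>R axis i 1) $ k) - (F (q + 0 *\<^sub>R axis i 1) $ k - F (p + 0 *\<^sub>R axis i 1) $ k)
           = (\<lambda>h. h * pd i F (q + s *\<^sub>R axis i 1) $ k - h * pd i F (p + s *\<^sub>R axis i 1) $ k) (t - 0)"
    by (rule mvt_simple[OF assms(1)], rule has_derivative_diff)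
       (auto intro!: has_derivative_component_along_axis assms(2,3))
  then show ?thesis by (auto simp: algebra_simps)
qed

lemma second_difference_mean_value:
  fixes F :: "real^'m::finite \<Rightarrow> real^'n::finite" and x :: "real^'m" and i j :: 'm
  defines "P \<equiv> \<lambda>s u. x + s *\<^sub>R axis i 1 + u *\<^sub>R axis j 1"
  assumes "0 < t"
    and "\<And>s u. s \<in> {0..t} \<Longrightarrow> u \<in> {0..t} \<Longrightarrow> F differentiable (at (P s u)) \<and> pd i F differentiable (at (P s u))"
  shows "\<exists>s\<in>{0<..<t}. \<exists>u\<in>{0<..<t}.
           F (P t t) $ k - F (x + t *\<^sub>R axis i 1) $ k - F (x + t *\<^sub>R axis j 1) $ k + F x $ k
             = t * (t * pd j (pd i F) (P s u) $ k)"
proof -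
  have shift: "x + u *\<^sub>R axis j 1 + s *\<^sub>R axis i 1 = P s u" "x + s *\<^sub>R axis i 1 = P s 0"
    "x + s *\<^sub>R axis j 1 = P 0 s" "P 0 0 = x" "P 0 u + s *\<^sub>R axis i 1 = P s u" "P s 0 + u *\<^sub>R axis j 1 = P s u" for s u
    by (simp_all add: P_def algebra_simps)
  have dF: "F differentiable (at (P s u))" and dFi: "pd i F differentiable (at (P s u))"
    if "s \<in> {0..t}" "u \<in> {0..t}" for s u
    using assms(3) that by auto
  obtain s where s: "s \<in> {0<..<t}" and eq1:
    "(F (P t t) $ k - F (P 0 t) $ k) - (F (P t 0) $ k - F x $ k)
       = t * (pd i F (P s t) $ k - pd i F (P s 0) $ k)"
  proof -
    have "F differentiable (at (x + s' *\<^sub>R axis i 1))"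
      "F differentiable (at ((x + t *\<^sub>R axis j 1) + s' *\<^sub>R axis i 1))" if "s' \<in> {0..t}" for s'
      using dF[OF that, of 0] dF[OF that, of t] assms(2) by (simp_all add: shift)
    from mvt_axis_component_diff[OF assms(2) this, of k] show ?thesis
      using that by (auto simp: shift)
  qed
  obtain u where u: "u \<in> {0<..<t}" and eq2:
    "pd i F (P s t) $ k - pd i F (P s 0) $ k = t * pd j (pd i F) (P s u) $ k"
  proof -
    have "pd i F differentiable (at (P s 0 + u' *\<^sub>R axis j 1))" if "u' \<in> {0..t}" for u'
      using dFi[OF _ that, of s] s by (simp add: shift)
    from mvt_axis_component[OF assms(2) this, of k] show ?thesis
      using that by (auto simp: shift)
  qed
  have "F (P t t) $ k - F (x + t *\<^sub>R axis i 1) $ k - F (x + t *\<^sub>R axis j 1) $ k + F x $ k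
      = t * (t * pd j (pd i F) (P s u) $ k)"
    using eq1 eq2 by (simp add: shift algebra_simps)
  then show ?thesis
    using s u by blast
qed

lemma mixed_partials_meet_near:
  fixes F :: "real^'m::finite \<Rightarrow> real^'n::finite"
  assumes "open U" "x \<in> U" "0 < \<delta>"
    and diff: "\<And>y. y \<in> U \<Longrightarrow>
      F differentiable (at y) \<and> pd i F differentiable (at y) \<and> pd j F differentiable (at y)"
  shows "\<exists>y z. dist y x < \<delta> \<and> dist z x < \<delta> \<and> pd j (pd i F) y $ k = pd i (pd j F) z $ k"
proof -
  obtain r where r: "r > 0" "ball x r \<subseteq> U"
    using assms(1,2) open_contains_ball by blast
  define t where "t = min r \<delta> / 3"
  have t: "0 < t" using r \<open>0 < \<delta>\<close> by (simp add: t_def)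
  have near: "x + s *\<^sub>R axis a 1 + u *\<^sub>R axis b 1 \<in> U \<and> dist (x + s *\<^sub>R axis a 1 + u *\<^sub>R axis b 1) x < \<delta>"
    if "s \<in> {0..t}" "u \<in> {0..t}" for s u a b
  proof -
    have "dist (x + s *\<^sub>R axis a 1 + u *\<^sub>R axis b 1) x
        \<le> norm (s *\<^sub>R axis a 1 :: real^'m) + norm (u *\<^sub>R axis b 1 :: real^'m)"
      unfolding dist_norm by (metis add_diff_cancel_left' add.assoc norm_triangle_ineq)
    also have "\<dots> < min r \<delta>" using that t by (simp add: t_def)
    finally show ?thesis using r by (auto simp: dist_commute)
  qed
  obtain s u where su: "s \<in> {0<..<t}" "u \<in> {0<..<t}" and eq_ij:
    "F (x + t *\<^sub>R axis i 1 + t *\<^sub>R axis j 1) $ k - F (x + t *\<^sub>R axis i 1) $ k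
       - F (x + t *\<^sub>R axis j 1) $ k + F x $ k
     = t * (t * pd j (pd i F) (x + s *\<^sub>R axis i 1 + u *\<^sub>R axis j 1) $ k)"
    using second_difference_mean_value[OF t, of F x i j k] diff near by blast
  obtain s' u' where su': "s' \<in> {0<..<t}" "u' \<in> {0<..<t}" and eq_ji:
    "F (x + t *\<^sub>R axis j 1 + t *\<^sub>R axis i 1) $ k - F (x + t *\<^sub>R axis j 1) $ k
       - F (x + t *\<^sub>R axis i 1) $ k + F x $ k
     = t * (t * pd i (pd j F) (x + s' *\<^sub>R axis j 1 + u' *\<^sub>R axis i 1) $ k)"
    using second_difference_mean_value[OF t, of F x j i k] diff near by blast
  have swap: "x + t *\<^sub>R axis j 1 + t *\<^sub>R axis i 1 = x + t *\<^sub>R axis i 1 + t *\<^sub>R axis j 1"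
    by (simp add: add_ac)
  have "t * (t * pd j (pd i F) (x + s *\<^sub>R axis i 1 + u *\<^sub>R axis j 1) $ k)
      = t * (t * pd i (pd j F) (x + s' *\<^sub>R axis j 1 + u' *\<^sub>R axis i 1) $ k)"
    using eq_ij eq_ji[unfolded swap] by linarith
  then have "pd j (pd i F) (x + s *\<^sub>R axis i 1 + u *\<^sub>R axis j 1) $ k
      = pd i (pd j F) (x + s' *\<^sub>R axis j 1 + u' *\<^sub>R axis i 1) $ k"
    using t by simp
  moreover have "dist (x + s *\<^sub>R axis i 1 + u *\<^sub>R axis j 1) x < \<delta>"
    "dist (x + s' *\<^sub>R axis j 1 + u' *\<^sub>R axis i 1) x < \<delta>"
    using su su' near by auto
  ultimately show ?thesis by blast
qed

lemma pd_commute: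
  fixes F :: "real^'m::finite \<Rightarrow> real^'n::finite"
  assumes "open U" "x \<in> U"
    and "\<And>y. y \<in> U \<Longrightarrow>
      F differentiable (at y) \<and> pd i F differentiable (at y) \<and> pd j F differentiable (at y)"
    and "isCont (pd j (pd i F)) x" "isCont (pd i (pd j F)) x"
  shows "pd i (pd j F) x = pd j (pd i F) x"
proof -
  have component_close: "\<exists>\<delta>>0. \<forall>y. dist y x < \<delta> \<longrightarrow> \<bar>G y $ k - G x $ k\<bar> < e"
    if "isCont G x" "e > 0" for G :: "real^'m \<Rightarrow> real^'n" and k e
    using that component_le_norm_cart unfolding continuous_at_eps_delta dist_norm
    by (metis le_less_trans vector_minus_component)
  have close: "\<bar>pd i (pd j F) x $ k - pd j (pd i F) x $ k\<bar> < 2 * e" if "e > 0" for k e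
  proof -
    obtain \<delta>1 where "\<delta>1 > 0" and \<delta>1: "\<And>y. dist y x < \<delta>1 \<Longrightarrow> \<bar>pd j (pd i F) y $ k - pd j (pd i F) x $ k\<bar> < e"
      using component_close[OF assms(4) \<open>e > 0\<close>] by blast
    obtain \<delta>2 where "\<delta>2 > 0" and \<delta>2: "\<And>y. dist y x < \<delta>2 \<Longrightarrow> \<bar>pd i (pd j F) y $ k - pd i (pd j F) x $ k\<bar> < e"
      using component_close[OF assms(5) \<open>e > 0\<close>] by blast
    obtain y z where "dist y x < min \<delta>1 \<delta>2" "dist z x < min \<delta>1 \<delta>2"
      and "pd j (pd i F) y $ k = pd i (pd j F) z $ k"
      using mixed_partials_meet_near[OF assms(1,2) _ assms(3)] \<open>\<delta>1 > 0\<close> \<open>\<delta>2 > 0\<close> by (metis min_less_iff_conj)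
    then show ?thesis
      using \<delta>1[of y] \<delta>2[of z] by auto
  qed
  show ?thesis
  proof (subst vec_eq_iff, intro allI)
    fix k
    show "pd i (pd j F) x $ k = pd j (pd i F) x $ k"
      using close[of "\<bar>pd i (pd j F) x $ k - pd j (pd i F) x $ k\<bar> / 2" k] by fastforce
  qed
qed

lemma sum_rotate3:
  "(\<Sum>l\<in>A. \<Sum>p\<in>B. \<Sum>q\<in>C. f l p q) = (\<Sum>p\<in>B. \<Sum>q\<in>C. \<Sum>l\<in>A. f l p q)"
  by (subst sum.swap) (rule sum.cong[OF refl sum.swap])

lemma double_sum_eq_inner_mult:
  fixes A :: "real^'n::finite^'n"
  shows "(\<Sum>i\<in>UNIV. \<Sum>j\<in>UNIV. A $ i $ j * u $ i * v $ j) = u \<bullet> (A *v v)"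
  by (simp add: inner_vec_def matrix_vector_mult_def sum_distrib_left mult_ac)

lemma quadratic_form_at_eigenvector:
  fixes R g Gi H :: "real^'n::finite^'n" and X :: "real^'n"
  assumes R: "\<And>i j. R $ i $ j = a * g $ i $ j + \<tau> * H $ i $ j
                 - (\<Sum>k\<in>UNIV. \<Sum>l\<in>UNIV. H $ i $ k * Gi $ k $ l * H $ l $ j)"
    and inv: "g ** Gi = mat 1"
    and eigen: "(\<chi> i. \<Sum>k\<in>UNIV. \<Sum>j\<in>UNIV. Gi $ i $ k * H $ k $ j * X $ j) = c *\<^sub>R X"
  shows "(\<Sum>i\<in>UNIV. \<Sum>j\<in>UNIV. R $ i $ j * X $ i * X $ j)
    = (a + \<tau> * c - c\<^sup>2) * (\<Sum>i\<in>UNIV. \<Sum>j\<in>UNIV. g $ i $ j * X $ i * X $ j)"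
proof -
  have GHX: "Gi *v (H *v X) = c *\<^sub>R X"
    using eigen by (simp add: vec_eq_iff matrix_vector_mult_def sum_distrib_left mult_ac)
  have HX: "H *v X = c *\<^sub>R (g *v X)"
    using arg_cong[where f = "\<lambda>v. g *v v", OF GHX]
    by (simp add: matrix_vector_mul_assoc matrix_mul_assoc inv matrix_vector_mult_scaleR)
  have "R = a *\<^sub>R g + \<tau> *\<^sub>R H - H ** (Gi ** H)"
    by (simp add: vec_eq_iff R matrix_matrix_mult_def sum_distrib_left sum_distrib_right mult_ac)
  then have "X \<bullet> (R *v X) = a * (X \<bullet> (g *v X)) + \<tau> * (X \<bullet> (H *v X)) - X \<bullet> (H *v (Gi *v (H *v X)))"
    by (simp add: matrix_vector_mult_diff_rdistrib matrix_vector_mult_add_rdistrib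
        scaleR_matrix_vector_assoc[symmetric] matrix_vector_mul_assoc[symmetric] inner_diff_right inner_add_right)
  also have "\<dots> = (a + \<tau> * c - c\<^sup>2) * (X \<bullet> (g *v X))"
    by (simp only: GHX) (simp add: HX matrix_vector_mult_scaleR algebra_simps power2_eq_square)
  finally show ?thesis
    by (simp only: double_sum_eq_inner_mult)
qed

lemma metric_entry: "metric \<phi> y $ i $ j = pd i \<phi> y \<bullet> pd j \<phi> y"
  by (simp add: metric_def)

locale sphere_hypersurface =
  fixes U :: "(real^'m::finite) set" and \<phi> \<eta> :: "real^'m \<Rightarrow> real^'n::finite"
  assumes chart: "sphere_hypersurface_chart U \<phi> \<eta>"
begin

lemma open_chart: "open U"
  using chart unfolding sphere_hypersurface_chart_def by blast

lemma differentiable_ipd_phi: "y \<in> U \<Longrightarrow> ipd is \<phi> differentiable (at y)"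
  using chart unfolding sphere_hypersurface_chart_def smooth_on_chart_def by blast

lemma differentiable_phi: "y \<in> U \<Longrightarrow> \<phi> differentiable (at y)"
  using differentiable_ipd_phi[of y "[]"] by simp

lemma differentiable_pd_phi: "y \<in> U \<Longrightarrow> pd a \<phi> differentiable (at y)"
  using differentiable_ipd_phi[of y "[a]"] by simp

lemma differentiable_pd2_phi: "y \<in> U \<Longrightarrow> pd a (pd b \<phi>) differentiable (at y)"
  using differentiable_ipd_phi[of y "[a, b]"] by simp

lemma differentiable_pd3_phi: "y \<in> U \<Longrightarrow> pd c (pd a (pd b \<phi>)) differentiable (at y)"
  using differentiable_ipd_phi[of y "[c, a, b]"] by simp

lemma pd2_phi_commute: "y \<in> U \<Longrightarrow> pd a (pd b \<phi>) y = pd b (pd a \<phi>) y"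
  by (rule pd_commute[OF open_chart])
     (auto intro: differentiable_phi differentiable_pd_phi differentiable_pd2_phi
       differentiable_imp_continuous_within)

lemma pd3_phi_commute:
  assumes x: "x \<in> U"
  shows "pd c (pd a (pd b \<phi>)) x = pd b (pd a (pd c \<phi>)) x"
proof -
  have "pd c (pd a (pd b \<phi>)) x = pd c (pd b (pd a \<phi>)) x"
    by (rule pd_cong_open[OF open_chart x]) (rule pd2_phi_commute)
  also have "\<dots> = pd b (pd c (pd a \<phi>)) x"
    by (rule pd_commute[OF open_chart x])
       (auto intro: differentiable_phi differentiable_pd_phi differentiable_pd2_phi
         differentiable_imp_continuous_within[OF differentiable_pd3_phi[OF x]])
  also have "\<dots> = pd b (pd a (pd c \<phi>)) x"
    by (rule pd_cong_open[OF open_chart x]) (rule pd2_phi_commute)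
  finally show ?thesis .
qed

lemma phi_inner_self: "y \<in> U \<Longrightarrow> \<phi> y \<bullet> \<phi> y = 1"
  using chart unfolding sphere_hypersurface_chart_def by (metis power2_norm_eq_inner power_one)

lemma eta_inner_self: "y \<in> U \<Longrightarrow> \<eta> y \<bullet> \<eta> y = 1"
  using chart unfolding sphere_hypersurface_chart_def by (metis power2_norm_eq_inner power_one)

lemma phi_inner_eta: "y \<in> U \<Longrightarrow> \<phi> y \<bullet> \<eta> y = 0"
  using chart unfolding sphere_hypersurface_chart_def by (simp add: inner_commute)

lemma pd_phi_inner_eta: "y \<in> U \<Longrightarrow> pd a \<phi> y \<bullet> \<eta> y = 0"
  using chart unfolding sphere_hypersurface_chart_def by (simp add: inner_commute)

lemma pd_phi_inner_phi:
  assumes y: "y \<in> U"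
  shows "pd a \<phi> y \<bullet> \<phi> y = 0"
proof -
  have "pd a (\<lambda>z. \<phi> z \<bullet> \<phi> z) y = pd a (\<lambda>z. 1) y"
    by (rule pd_cong_open[OF open_chart y]) (rule phi_inner_self)
  then show ?thesis
    using pd_inner[OF differentiable_phi[OF y] differentiable_phi[OF y], of a]
    by (simp add: pd_const inner_commute)
qed

lemma pd2_phi_inner_phi:
  assumes y: "y \<in> U"
  shows "pd a (pd b \<phi>) y \<bullet> \<phi> y = - (pd a \<phi> y \<bullet> pd b \<phi> y)"
proof -
  have "pd a (\<lambda>z. pd b \<phi> z \<bullet> \<phi> z) y = pd a (\<lambda>z. 0) y"
    by (rule pd_cong_open[OF open_chart y]) (rule pd_phi_inner_phi)
  then show ?thesis
    using pd_inner[OF differentiable_pd_phi[OF y] differentiable_phi[OF y], of a b]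
    by (simp add: pd_const inner_commute eq_neg_iff_add_eq_0)
qed

lemma frechet_derivative_phi_eq_sum:
  assumes y: "y \<in> U"
  shows "frechet_derivative \<phi> (at y) c = (\<Sum>j\<in>UNIV. c $ j *\<^sub>R pd j \<phi> y)"
proof -
  have lin: "linear (frechet_derivative \<phi> (at y))"
    using differentiable_phi[OF y] frechet_derivative_works has_derivative_linear by blast
  have "c = (\<Sum>j\<in>UNIV. c $ j *\<^sub>R axis j 1)"
    using basis_expansion[of c] by (simp add: scalar_mult_eq_scaleR)
  then have "frechet_derivative \<phi> (at y) c
      = frechet_derivative \<phi> (at y) (\<Sum>j\<in>UNIV. c $ j *\<^sub>R axis j 1)"
    by simp
  also have "\<dots> = (\<Sum>j\<in>UNIV. c $ j *\<^sub>R pd j \<phi> y)"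
    using lin by (simp add: linear_sum linear_scale pd_def)
  finally show ?thesis .
qed

lemma metric_invertible:
  assumes y: "y \<in> U"
  shows "invertible (metric \<phi> y)"
proof -
  have "c = 0" if c: "metric \<phi> y *v c = 0" for c
  proof -
    let ?D = "frechet_derivative \<phi> (at y)"
    have "?D c \<bullet> pd i \<phi> y = (metric \<phi> y *v c) $ i" for i
      by (simp add: frechet_derivative_phi_eq_sum[OF y] inner_sum_left metric_entry
          matrix_vector_mult_def mult.commute inner_commute[of "pd i \<phi> y"])
    then have "?D c \<bullet> ?D c = 0"
      using c by (simp add: frechet_derivative_phi_eq_sum[OF y] inner_sum_right)
    then have "?D c = 0" by simp
    moreover have "?D 0 = 0"
      using differentiable_phi[OF y] frechet_derivative_works has_derivative_linear linear_0 by blast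
    moreover have "inj ?D"
      using chart y unfolding sphere_hypersurface_chart_def by blast
    ultimately show "c = 0" by (metis injD)
  qed
  then show ?thesis
    using matrix_left_invertible_ker invertible_left_inverse by blast
qed

lemma metric_inv_inverse:
  assumes y: "y \<in> U"
  shows "metric \<phi> y ** metric_inv \<phi> y = mat 1" "metric_inv \<phi> y ** metric \<phi> y = mat 1"
proof -
  have "\<exists>A'. metric \<phi> y ** A' = mat 1 \<and> A' ** metric \<phi> y = mat 1"
    using metric_invertible[OF y] unfolding invertible_def .
  then show "metric \<phi> y ** metric_inv \<phi> y = mat 1" "metric_inv \<phi> y ** metric \<phi> y = mat 1"
    unfolding metric_inv_def matrix_inv_def by (metis (mono_tags, lifting) someI_ex)+
qed

lemma sum_metric_metric_inv:
  "y \<in> U \<Longrightarrow> (\<Sum>k\<in>UNIV. metric \<phi> y $ i $ k * metric_inv \<phi> y $ k $ j) = (if i = j then 1 else 0)"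
  using arg_cong[where f = "\<lambda>A. A $ i $ j", OF metric_inv_inverse(1)]
  by (simp add: matrix_matrix_mult_def mat_def)

lemma sum_metric_inv_metric:
  "y \<in> U \<Longrightarrow> (\<Sum>k\<in>UNIV. metric_inv \<phi> y $ i $ k * metric \<phi> y $ k $ j) = (if i = j then 1 else 0)"
  using arg_cong[where f = "\<lambda>A. A $ i $ j", OF metric_inv_inverse(2)]
  by (simp add: matrix_matrix_mult_def mat_def)

lemma differentiable_metric: "y \<in> U \<Longrightarrow> (\<lambda>z. metric \<phi> z $ i $ j) differentiable (at y)"
  by (simp add: metric_entry differentiable_pd_phi)

text \<open>By Cramer's rule the entries of the inverse metric are quotients of determinants.\<close>
lemma differentiable_metric_inv:
  assumes y: "y \<in> U"
  shows "(\<lambda>z. metric_inv \<phi> z $ k $ l) differentiable (at y)"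
proof (rule differentiable_cong_open[OF open_chart y])
  let ?N = "\<lambda>z. det (\<chi> i j. if j = k then axis l 1 $ i else metric \<phi> z $ i $ j)"
  show "?N z / det (metric \<phi> z) = metric_inv \<phi> z $ k $ l" if z: "z \<in> U" for z
  proof -
    have "metric \<phi> z *v (\<chi> k. metric_inv \<phi> z $ k $ l) = axis l 1"
      by (simp add: vec_eq_iff matrix_vector_mult_def sum_metric_metric_inv[OF z] axis_def)
    then show ?thesis
      using cramer[OF invertible_det_nz[THEN iffD1, OF metric_invertible[OF z]]]
      by (simp add: vec_eq_iff)
  qed
  have "?N differentiable (at y)"
  proof (rule differentiable_det)
    fix i j
    show "(\<lambda>z. (\<chi> i j. if j = k then axis l 1 $ i else metric \<phi> z $ i $ j) $ i $ j) differentiable (at y)"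
      by (cases "j = k") (simp_all add: differentiable_metric[OF y])
  qed
  moreover have "(\<lambda>z. det (metric \<phi> z)) differentiable (at y)"
    by (rule differentiable_det) (simp add: differentiable_metric[OF y])
  ultimately show "(\<lambda>z. ?N z / det (metric \<phi> z)) differentiable (at y)"
    using invertible_det_nz metric_invertible[OF y] by (auto intro!: differentiable_divide)
qed

lemma pd_metric:
  "x \<in> U \<Longrightarrow> pd c (\<lambda>y. metric \<phi> y $ l $ j) x
     = pd c (pd l \<phi>) x \<bullet> pd j \<phi> x + pd l \<phi> x \<bullet> pd c (pd j \<phi>) x"
  by (simp add: metric_entry pd_inner differentiable_pd_phi)

text \<open>Differentiating \<open>G g = 1\<close> gives \<open>\<partial>G = - G (\<partial>g) G\<close>.\<close>
lemma pd_metric_inv: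
  assumes x: "x \<in> U"
  shows "pd c (\<lambda>y. metric_inv \<phi> y $ k $ q) x =
    - (\<Sum>p\<in>UNIV. \<Sum>r\<in>UNIV. metric_inv \<phi> x $ k $ p
         * (pd c (pd p \<phi>) x \<bullet> pd r \<phi> x + pd p \<phi> x \<bullet> pd c (pd r \<phi>) x) * metric_inv \<phi> x $ r $ q)"
proof -
  let ?G = "metric_inv \<phi> x" and ?g = "metric \<phi> x"
  let ?dG = "\<lambda>l. pd c (\<lambda>y. metric_inv \<phi> y $ k $ l) x"
  let ?dg = "\<lambda>l j. pd c (pd l \<phi>) x \<bullet> pd j \<phi> x + pd l \<phi> x \<bullet> pd c (pd j \<phi>) x"
  have dGg: "(\<Sum>l\<in>UNIV. ?dG l * ?g $ l $ j) = - (\<Sum>l\<in>UNIV. ?G $ k $ l * ?dg l j)" for j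
  proof -
    have "0 = pd c (\<lambda>y. \<Sum>l\<in>UNIV. metric_inv \<phi> y $ k $ l * metric \<phi> y $ l $ j) x"
      using pd_cong_open[OF open_chart x sum_metric_inv_metric] by (simp add: pd_const)
    also have "\<dots> = (\<Sum>l\<in>UNIV. ?dG l * ?g $ l $ j + ?G $ k $ l * ?dg l j)"
      by (simp add: pd_sum pd_mult differentiable_metric_inv[OF x] differentiable_metric[OF x]
          pd_metric[OF x])
    finally show ?thesis by (simp add: sum.distrib eq_neg_iff_add_eq_0)
  qed
  have "?dG q = (\<Sum>l\<in>UNIV. ?dG l * (\<Sum>j\<in>UNIV. ?g $ l $ j * ?G $ j $ q))"
    by (simp add: sum_metric_metric_inv[OF x] if_distrib cong: if_cong)
  also have "\<dots> = (\<Sum>j\<in>UNIV. (\<Sum>l\<in>UNIV. ?dG l * ?g $ l $ j) * ?G $ j $ q)"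
    by (simp add: sum_distrib_left sum_distrib_right mult.assoc) (rule sum.swap)
  also have "\<dots> = - (\<Sum>l\<in>UNIV. \<Sum>j\<in>UNIV. ?G $ k $ l * ?dg l j * ?G $ j $ q)"
    by (simp add: dGg sum_distrib_right sum_negf) (rule sum.swap)
  finally show ?thesis .
qed

lemma christoffel_eq:
  assumes y: "y \<in> U"
  shows "christoffel \<phi> k i j y = (\<Sum>l\<in>UNIV. metric_inv \<phi> y $ k $ l * (pd i (pd j \<phi>) y \<bullet> pd l \<phi> y))"
proof -
  have "pd i (\<lambda>y. metric \<phi> y $ j $ l) y + pd j (\<lambda>y. metric \<phi> y $ i $ l) y - pd l (\<lambda>y. metric \<phi> y $ i $ j) y
      = 2 * (pd i (pd j \<phi>) y \<bullet> pd l \<phi> y)" for l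
    using pd2_phi_commute[OF y, of j i] pd2_phi_commute[OF y, of l i] pd2_phi_commute[OF y, of l j]
    by (simp add: pd_metric[OF y] inner_commute)
  then show ?thesis unfolding christoffel_def by (simp add: sum_distrib_left)
qed

lemma pd_christoffel:
  assumes x: "x \<in> U"
  shows "pd c (christoffel \<phi> k i j) x
    = (\<Sum>l\<in>UNIV. pd c (\<lambda>y. metric_inv \<phi> y $ k $ l) x * (pd i (pd j \<phi>) x \<bullet> pd l \<phi> x)
       + metric_inv \<phi> x $ k $ l * (pd c (pd i (pd j \<phi>)) x \<bullet> pd l \<phi> x + pd i (pd j \<phi>) x \<bullet> pd c (pd l \<phi>) x))"
proof -
  have "pd c (christoffel \<phi> k i j) x
      = pd c (\<lambda>y. \<Sum>l\<in>UNIV. metric_inv \<phi> y $ k $ l * (pd i (pd j \<phi>) y \<bullet> pd l \<phi> y)) x"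
    by (rule pd_cong_open[OF open_chart x]) (rule christoffel_eq)
  then show ?thesis
    by (simp add: pd_sum pd_mult pd_inner differentiable_metric_inv[OF x]
        differentiable_pd2_phi[OF x] differentiable_pd_phi[OF x])
qed

text \<open>The tangent vectors \<open>\<partial>\<^sub>a\<phi>\<close> together with \<open>\<eta>\<close> and \<open>\<phi>\<close> are \<open>m + 2\<close> independent vectors
  of \<open>\<real>\<^sup>m\<^sup>+\<^sup>2\<close>, hence span it.\<close>
lemma orthogonal_frame_eq_0:
  assumes x: "x \<in> U"
    and "\<And>a. w \<bullet> pd a \<phi> x = 0" "w \<bullet> \<eta> x = 0" "w \<bullet> \<phi> x = 0"
  shows "w = 0"
proof -
  let ?D = "frechet_derivative \<phi> (at x)"
  have linD: "linear ?D"
    using differentiable_phi[OF x] frechet_derivative_works has_derivative_linear by blast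
  define L where "L = (\<lambda>(c, s, t). ?D c + s *\<^sub>R \<eta> x + t *\<^sub>R \<phi> x)"
  have linL: "linear L"
    unfolding L_def
    by (rule linearI) (auto simp: linear_add[OF linD] linear_scale[OF linD] algebra_simps)
  have D_orth: "?D c \<bullet> \<eta> x = 0" "?D c \<bullet> \<phi> x = 0" for c
    by (simp_all add: frechet_derivative_phi_eq_sum[OF x] inner_sum_left
        pd_phi_inner_eta[OF x] pd_phi_inner_phi[OF x])
  have "p = 0" if "L p = 0" for p
  proof -
    obtain c s t where p: "p = (c, s, t)" by (metis prod.collapse)
    have Lp: "?D c + s *\<^sub>R \<eta> x + t *\<^sub>R \<phi> x = 0" using that p L_def by simp
    have "s = 0"
      using arg_cong[where f = "\<lambda>v. v \<bullet> \<eta> x", OF Lp] D_orth eta_inner_self[OF x] phi_inner_eta[OF x]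
      by (simp add: inner_add_left)
    moreover have "t = 0"
      using arg_cong[where f = "\<lambda>v. v \<bullet> \<phi> x", OF Lp] D_orth phi_inner_self[OF x] phi_inner_eta[OF x]
      by (simp add: inner_add_left inner_commute[of "\<eta> x" "\<phi> x"])
    moreover have "c = 0"
    proof -
      have "?D c = ?D 0" using Lp \<open>s = 0\<close> \<open>t = 0\<close> linear_0[OF linD] by simp
      moreover have "inj ?D" using chart x unfolding sphere_hypersurface_chart_def by blast
      ultimately show ?thesis by (metis injD)
    qed
    ultimately show ?thesis using p by (simp add: zero_prod_def)
  qed
  then have "inj_on L (span UNIV)"
    by (intro inj_onI) (metis linear_diff[OF linL] right_minus_eq)
  then have "dim (range L) = CARD('m) + 2"
    using dim_image_eq[OF linL] by simp
  then have "span (range L) = UNIV"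
    using chart dim_eq_full unfolding sphere_hypersurface_chart_def by fastforce
  then have "w \<in> range L"
    using span_eq_iff linear_subspace_image[OF linL subspace_UNIV] by blast
  then obtain c s t where w: "w = ?D c + s *\<^sub>R \<eta> x + t *\<^sub>R \<phi> x"
    unfolding L_def by auto
  have "w \<bullet> ?D c = 0"
    using assms(2) by (simp add: frechet_derivative_phi_eq_sum[OF x] inner_sum_right)
  then have "w \<bullet> w = 0"
    using assms(3,4) by (subst (2) w) (simp add: inner_add_right)
  then show "w = 0" by simp
qed

lemma inner_frame_expansion:
  assumes x: "x \<in> U"
  shows "u \<bullet> v = (\<Sum>b\<in>UNIV. (\<Sum>a\<in>UNIV. metric_inv \<phi> x $ b $ a * (u \<bullet> pd a \<phi> x)) * (v \<bullet> pd b \<phi> x))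
     + (u \<bullet> \<eta> x) * (v \<bullet> \<eta> x) + (u \<bullet> \<phi> x) * (v \<bullet> \<phi> x)"
proof -
  define co where "co = (\<lambda>b. \<Sum>a\<in>UNIV. metric_inv \<phi> x $ b $ a * (u \<bullet> pd a \<phi> x))"
  define w where "w = u - (\<Sum>b\<in>UNIV. co b *\<^sub>R pd b \<phi> x) - (u \<bullet> \<eta> x) *\<^sub>R \<eta> x - (u \<bullet> \<phi> x) *\<^sub>R \<phi> x"
  have "(\<Sum>b\<in>UNIV. co b * (pd b \<phi> x \<bullet> pd c \<phi> x))
      = (\<Sum>a\<in>UNIV. (u \<bullet> pd a \<phi> x) * (\<Sum>b\<in>UNIV. metric \<phi> x $ c $ b * metric_inv \<phi> x $ b $ a))" for c
    unfolding co_def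
    by (simp add: sum_distrib_right sum_distrib_left metric_entry inner_commute mult_ac)
       (rule sum.swap)
  then have "(\<Sum>b\<in>UNIV. co b * (pd b \<phi> x \<bullet> pd c \<phi> x)) = u \<bullet> pd c \<phi> x" for c
    by (simp add: sum_metric_metric_inv[OF x] if_distrib cong: if_cong)
  then have "w \<bullet> pd c \<phi> x = 0" for c
    unfolding w_def
    by (simp add: inner_diff_left inner_sum_left pd_phi_inner_eta[OF x] pd_phi_inner_phi[OF x]
        inner_commute[of "\<eta> x" "pd c \<phi> x"] inner_commute[of "\<phi> x" "pd c \<phi> x"])
  moreover have "w \<bullet> \<eta> x = 0" "w \<bullet> \<phi> x = 0"
    unfolding w_def
    by (simp_all add: inner_diff_left inner_sum_left pd_phi_inner_eta[OF x] pd_phi_inner_phi[OF x]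
        eta_inner_self[OF x] phi_inner_self[OF x] phi_inner_eta[OF x] inner_commute[of "\<eta> x" "\<phi> x"])
  ultimately have "w = 0"
    by (rule orthogonal_frame_eq_0[OF x])
  then have "u = (\<Sum>b\<in>UNIV. co b *\<^sub>R pd b \<phi> x) + (u \<bullet> \<eta> x) *\<^sub>R \<eta> x + (u \<bullet> \<phi> x) *\<^sub>R \<phi> x"
    unfolding w_def by (simp add: algebra_simps)
  from arg_cong[where f = "\<lambda>z. v \<bullet> z", OF this] show ?thesis
    unfolding co_def by (simp add: inner_add_right inner_sum_right inner_commute[of u v])
qed

text \<open>The derivative of the inverse metric cancels against the quadratic Christoffel term once
  \<open>\<langle>\<partial>\<^sub>i\<partial>\<^sub>j\<phi>, \<partial>\<^sub>c\<partial>\<^sub>l\<phi>\<rangle>\<close> is expanded in the frame \<open>\<partial>\<phi>, \<eta>, \<phi>\<close>.\<close>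
lemma pd_christoffel_add_christoffel_mult:
  assumes x: "x \<in> U"
  shows "pd c (christoffel \<phi> k i j) x + (\<Sum>l\<in>UNIV. christoffel \<phi> k c l x * christoffel \<phi> l i j x)
    = (\<Sum>l\<in>UNIV. metric_inv \<phi> x $ k $ l * (pd c (pd i (pd j \<phi>)) x \<bullet> pd l \<phi> x))
      + sff \<phi> \<eta> x $ i $ j * (\<Sum>l\<in>UNIV. metric_inv \<phi> x $ k $ l * sff \<phi> \<eta> x $ c $ l)
      + metric \<phi> x $ i $ j * (\<Sum>l\<in>UNIV. metric_inv \<phi> x $ k $ l * metric \<phi> x $ c $ l)"
proof -
  let ?G = "metric_inv \<phi> x" and ?\<Gamma> = "\<lambda>q. christoffel \<phi> q i j x"
  let ?E = "\<lambda>a. pd a \<phi> x" and ?T = "\<lambda>a b. pd a (pd b \<phi>) x"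
  have dG: "(\<Sum>l\<in>UNIV. pd c (\<lambda>y. metric_inv \<phi> y $ k $ l) x * (?T i j \<bullet> ?E l))
      = - (\<Sum>p\<in>UNIV. \<Sum>q\<in>UNIV. ?G $ k $ p * (?T c p \<bullet> ?E q + ?E p \<bullet> ?T c q) * ?\<Gamma> q)"
  proof -
    have "(\<Sum>l\<in>UNIV. pd c (\<lambda>y. metric_inv \<phi> y $ k $ l) x * (?T i j \<bullet> ?E l))
        = - (\<Sum>l\<in>UNIV. \<Sum>p\<in>UNIV. \<Sum>q\<in>UNIV.
               ?G $ k $ p * (?T c p \<bullet> ?E q + ?E p \<bullet> ?T c q) * (?G $ q $ l * (?T i j \<bullet> ?E l)))"
      by (simp add: pd_metric_inv[OF x] sum_distrib_right sum_negf mult.assoc)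
    also have "\<dots> = - (\<Sum>p\<in>UNIV. \<Sum>q\<in>UNIV. \<Sum>l\<in>UNIV.
               ?G $ k $ p * (?T c p \<bullet> ?E q + ?E p \<bullet> ?T c q) * (?G $ q $ l * (?T i j \<bullet> ?E l)))"
      by (subst sum_rotate3) (rule refl)
    finally show ?thesis
      by (simp add: christoffel_eq[OF x] sum_distrib_left)
  qed
  have TT: "(\<Sum>l\<in>UNIV. ?G $ k $ l * (?T i j \<bullet> ?T c l))
      = (\<Sum>p\<in>UNIV. \<Sum>q\<in>UNIV. ?G $ k $ p * (?T c p \<bullet> ?E q) * ?\<Gamma> q)
        + sff \<phi> \<eta> x $ i $ j * (\<Sum>l\<in>UNIV. ?G $ k $ l * sff \<phi> \<eta> x $ c $ l)
        + metric \<phi> x $ i $ j * (\<Sum>l\<in>UNIV. ?G $ k $ l * metric \<phi> x $ c $ l)"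
  proof -
    have "?T i j \<bullet> ?T c l = (\<Sum>q\<in>UNIV. ?\<Gamma> q * (?T c l \<bullet> ?E q))
        + sff \<phi> \<eta> x $ i $ j * sff \<phi> \<eta> x $ c $ l + metric \<phi> x $ i $ j * metric \<phi> x $ c $ l" for l
      using inner_frame_expansion[OF x, of "?T i j" "?T c l"]
      by (simp add: christoffel_eq[OF x] pd2_phi_inner_phi[OF x] sff_def metric_entry)
    then show ?thesis
      by (simp add: distrib_left sum.distrib sum_distrib_left mult_ac)
  qed
  have \<Gamma>\<Gamma>: "(\<Sum>l\<in>UNIV. christoffel \<phi> k c l x * ?\<Gamma> l)
      = (\<Sum>p\<in>UNIV. \<Sum>q\<in>UNIV. ?G $ k $ p * (?E p \<bullet> ?T c q) * ?\<Gamma> q)"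
    by (simp add: christoffel_eq[OF x, of k c] sum_distrib_left sum_distrib_right inner_commute mult_ac)
       (rule sum.swap)
  have "pd c (christoffel \<phi> k i j) x = (\<Sum>l\<in>UNIV. pd c (\<lambda>y. metric_inv \<phi> y $ k $ l) x * (?T i j \<bullet> ?E l))
      + (\<Sum>l\<in>UNIV. ?G $ k $ l * (pd c (pd i (pd j \<phi>)) x \<bullet> ?E l))
      + (\<Sum>l\<in>UNIV. ?G $ k $ l * (?T i j \<bullet> ?T c l))"
    by (simp add: pd_christoffel[OF x] sum.distrib distrib_left)
  moreover have "(\<Sum>p\<in>UNIV. \<Sum>q\<in>UNIV. ?G $ k $ p * (?T c p \<bullet> ?E q + ?E p \<bullet> ?T c q) * ?\<Gamma> q)
      = (\<Sum>p\<in>UNIV. \<Sum>q\<in>UNIV. ?G $ k $ p * (?T c p \<bullet> ?E q) * ?\<Gamma> q)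
        + (\<Sum>p\<in>UNIV. \<Sum>q\<in>UNIV. ?G $ k $ p * (?E p \<bullet> ?T c q) * ?\<Gamma> q)"
    by (simp add: distrib_left distrib_right sum.distrib)
  ultimately show ?thesis
    using dG TT \<Gamma>\<Gamma> by linarith
qed

lemma sff_sym: "x \<in> U \<Longrightarrow> sff \<phi> \<eta> x $ i $ j = sff \<phi> \<eta> x $ j $ i"
  by (simp add: sff_def pd2_phi_commute)

lemma metric_sym: "metric \<phi> x $ i $ j = metric \<phi> x $ j $ i"
  by (simp add: metric_entry inner_commute)

lemma ricci_gauss_equation:
  assumes x: "x \<in> U"
  shows "ricci \<phi> x $ i $ j = (real CARD('m) - 1) * metric \<phi> x $ i $ j
      + (\<Sum>k\<in>UNIV. \<Sum>l\<in>UNIV. metric_inv \<phi> x $ k $ l * sff \<phi> \<eta> x $ k $ l) * sff \<phi> \<eta> x $ i $ j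
      - (\<Sum>k\<in>UNIV. \<Sum>l\<in>UNIV. sff \<phi> \<eta> x $ i $ k * metric_inv \<phi> x $ k $ l * sff \<phi> \<eta> x $ l $ j)"
proof -
  let ?G = "metric_inv \<phi> x" and ?g = "metric \<phi> x" and ?h = "sff \<phi> \<eta> x"
  have Gg: "(\<Sum>l\<in>UNIV. ?G $ k $ l * ?g $ c $ l) = (if k = c then 1 else 0)" for k c
    using sum_metric_inv_metric[OF x, of k c] by (simp add: metric_sym[of _ c])
  have summand: "pd k (christoffel \<phi> k i j) x - pd j (christoffel \<phi> k i k) x
        + (\<Sum>l\<in>UNIV. christoffel \<phi> k k l x * christoffel \<phi> l i j x - christoffel \<phi> k j l x * christoffel \<phi> l i k x)
      = ?h $ i $ j * (\<Sum>l\<in>UNIV. ?G $ k $ l * ?h $ k $ l) + ?g $ i $ j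
        - ?h $ i $ k * (\<Sum>l\<in>UNIV. ?G $ k $ l * ?h $ l $ j) - ?g $ i $ k * (if k = j then 1 else 0)" for k
  proof -
    have "(\<Sum>l\<in>UNIV. ?G $ k $ l * ?h $ j $ l) = (\<Sum>l\<in>UNIV. ?G $ k $ l * ?h $ l $ j)"
      using sff_sym[OF x, of j] by simp
    then show ?thesis
      using pd_christoffel_add_christoffel_mult[OF x, of k k i j, unfolded Gg]
        pd_christoffel_add_christoffel_mult[OF x, of j k i k, unfolded Gg]
        pd3_phi_commute[OF x, of k i j]
      by (simp only: sum_subtractf simp_thms if_True mult_1_right)
  qed
  have "ricci \<phi> x $ i $ j = (\<Sum>k\<in>UNIV. ?h $ i $ j * (\<Sum>l\<in>UNIV. ?G $ k $ l * ?h $ k $ l))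
      + (\<Sum>k::'m\<in>UNIV. ?g $ i $ j) - (\<Sum>k\<in>UNIV. ?h $ i $ k * (\<Sum>l\<in>UNIV. ?G $ k $ l * ?h $ l $ j))
      - (\<Sum>k\<in>UNIV. ?g $ i $ k * (if k = j then 1 else 0))"
    unfolding ricci_def vec_lambda_beta summand by (simp only: sum.distrib sum_subtractf)
  moreover have "(\<Sum>k\<in>UNIV. ?g $ i $ k * (if k = j then 1 else 0)) = ?g $ i $ j"
    by (simp add: if_distrib cong: if_cong)
  ultimately show ?thesis
    by (simp add: sum_distrib_left algebra_simps)
qed

end

theorem mainTheorem14:
  fixes U :: "(real^'m::finite) set"
    and \<phi> \<eta> :: "real^'m \<Rightarrow> real^'n::finite"
  assumes "sphere_hypersurface_chart U \<phi> \<eta>"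
    and "biharmonic_chart U \<phi> \<eta>"
  shows "\<forall>x\<in>U.
    ricci_form \<phi> x (grad_chart \<phi> (mean_curv \<phi> \<eta>) x) (grad_chart \<phi> (mean_curv \<phi> \<eta>) x)
    = (real CARD('m) - 1 - 3 * (real CARD('m))^2 / 4 * (mean_curv \<phi> \<eta> x)^2)
      * g_inner \<phi> x (grad_chart \<phi> (mean_curv \<phi> \<eta>) x) (grad_chart \<phi> (mean_curv \<phi> \<eta>) x)"
proof
  fix x assume x: "x \<in> U"
  interpret sphere_hypersurface U \<phi> \<eta>
    by (rule sphere_hypersurface.intro) (rule assms(1))
  let ?m = "real CARD('m)" and ?f = "mean_curv \<phi> \<eta> x"
  let ?X = "grad_chart \<phi> (mean_curv \<phi> \<eta>) x"
  have trace: "(\<Sum>k\<in>UNIV. \<Sum>l\<in>UNIV. metric_inv \<phi> x $ k $ l * sff \<phi> \<eta> x $ k $ l) = ?m * ?f"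
    by (simp add: mean_curv_def)
  have "(\<chi> i. \<Sum>k\<in>UNIV. \<Sum>j\<in>UNIV. metric_inv \<phi> x $ i $ k * sff \<phi> \<eta> x $ k $ j * ?X $ j)
      = (- (?m / 2) * ?f) *\<^sub>R ?X"
    using assms(2) x unfolding biharmonic_chart_def shape_op_def by blast
  from quadratic_form_at_eigenvector[OF ricci_gauss_equation[OF x, unfolded trace] metric_inv_inverse(1)[OF x] this]
  show "ricci_form \<phi> x ?X ?X = (?m - 1 - 3 * ?m\<^sup>2 / 4 * ?f\<^sup>2) * g_inner \<phi> x ?X ?X"
    unfolding ricci_form_def g_inner_def by (simp add: algebra_simps power2_eq_square)
qed

end
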